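(* Assume that for each $\ell\in I_{n-1}$ and every $j\in I_n\setminus I_\ell$, $\alpha_jY^{\{\ell\}}<1$ and every $y\in\gamma_\ell\cap\pi_1\cap\cdots\cap\pi_{\ell-1}$ satisfies $\alpha_jy\le 1$. Then $Y^{\{n\}}=(0,\dots,0,a_{nn}^{-1})^T$ is a global attractor.
   Context: Fix $n\ge 2$ and $I_m=\{1,\dots,m\}$. Consider the Lotka–Volterra system $x_i'=b_ix_i(1-\alpha_ix)$, $i\in I_n$, where $b_i>0$, $\alpha_i=(a_{i1},\dots,a_{in})$ with $a_{ii}>0$ and $a_{ij}\ge 0$. Solutions are considered in $\mathbb{R}^n_+$. An equilibrium $x^*\in\mathbb{R}^n_+$ is a global attractor if every solution with $x(0)\in\operatorname{int}\mathbb{R}^n_+$ satisfies $x(t)\to x^*$. $Y^{\{\ell\}}$ denotes the point with $\ell$th coordinate $a_{\ell\ell}^{-1}$ and all other coordinates $0$. $\pi_i=\{x\in\mathbb{R}^n_+:x_i=0\}$ (for $\ell=1$ the empty intersection of $\pi$'s is $\mathbb{R}^n_+$), $\gamma_i=\{x\in\mathbb{R}^n_+:\alpha_ix=1\}$. *)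

theory Defs
  imports "HOL-Analysis.Analysis"
begin

text \<open>Vectors in R^n are represented as functions nat => real, of which only the
  coordinates 1..n matter. The interaction matrix is a :: nat => nat => real,
  with alpha_i = (a i 1, ..., a i n).\<close>

definition alpha :: "nat \<Rightarrow> (nat \<Rightarrow> nat \<Rightarrow> real) \<Rightarrow> nat \<Rightarrow> (nat \<Rightarrow> real) \<Rightarrow> real" where
  "alpha n a i x = (\<Sum>k\<in>{1..n}. a i k * x k)"

definition Yax :: "(nat \<Rightarrow> nat \<Rightarrow> real) \<Rightarrow> nat \<Rightarrow> nat \<Rightarrow> real" where
  "Yax a l = (\<lambda>k. if k = l then 1 / a l l else 0)"

definition nonneg_orthant :: "nat \<Rightarrow> (nat \<Rightarrow> real) set" where
  "nonneg_orthant n = {y. \<forall>k\<in>{1..n}. 0 \<le> y k}"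

definition pos_orthant :: "nat \<Rightarrow> (nat \<Rightarrow> real) set" where
  "pos_orthant n = {y. \<forall>k\<in>{1..n}. 0 < y k}"

definition LV_solution :: "nat \<Rightarrow> (nat \<Rightarrow> real) \<Rightarrow> (nat \<Rightarrow> nat \<Rightarrow> real) \<Rightarrow> (real \<Rightarrow> nat \<Rightarrow> real) \<Rightarrow> bool" where
  "LV_solution n b a x \<longleftrightarrow>
     (\<forall>t\<ge>0. \<forall>i\<in>{1..n}.
        ((\<lambda>s. x s i) has_real_derivative (b i * x t i * (1 - alpha n a i (x t)))) (at t within {0..}))"

definition global_attractor :: "nat \<Rightarrow> (nat \<Rightarrow> real) \<Rightarrow> (nat \<Rightarrow> nat \<Rightarrow> real) \<Rightarrow> (nat \<Rightarrow> real) \<Rightarrow> bool" where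
  "global_attractor n b a xs \<longleftrightarrow>
     xs \<in> nonneg_orthant n \<and>
     (\<forall>x. LV_solution n b a x \<and> x 0 \<in> pos_orthant n \<longrightarrow>
        (\<forall>i\<in>{1..n}. ((\<lambda>t. x t i) \<longlongrightarrow> xs i) at_top))"

end

theory Submission
  imports Defs
begin

text \<open>
  The hypotheses are first converted into two inequalities on the
  matrix: a_jl < a_ll and a_jk \<le> a_lk for l < j and l \<le> k.  For a positive solution we
  then show, using only elementary barrier arguments (a quantity that is pushed down at a
  uniform rate whenever it lies above a level eventually stays below that level):
  positivity, eventual boundedness and persistence of the total population.  The core is
  an induction over the species: if species 1, ..., p-1 die out, then the quantity
  gap = ln (\<Sum>_{j>p} x_j^{b_p/b_j}) - ln x_p eventually exceeds every level, because its
  derivative is a weighted average of alpha_p x - alpha_j x, which the matrix inequalities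
  bound below by a positive multiple of x_p up to a vanishing error; this forces x_p \<to> 0
  and shows that the species above p persist.  Finally the persistent top species,
  alone in the limit, converges to its carrying capacity 1/a_nn.
\<close>

lemma deriv_barrier_reached:
  fixes f f' :: "real \<Rightarrow> real"
  assumes der: "\<And>t. t \<ge> T \<Longrightarrow> (f has_real_derivative f' t) (at t)"
    and slope: "\<And>t. t \<ge> T \<Longrightarrow> f t \<ge> c \<Longrightarrow> f' t \<le> -\<kappa>"
    and "\<kappa> > 0"
  obtains T1 where "T1 \<ge> T" "f T1 \<le> c"
proof (rule ccontr)
  assume "\<not> thesis"
  with that have above: "\<And>t. t \<ge> T \<Longrightarrow> f t > c" by force
  define L where "L = (f T - c) / \<kappa> + 1"
  have "(f T - c) / \<kappa> > 0" using above[of T] \<open>\<kappa> > 0\<close> by simp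
  hence "L > 0" by (simp add: L_def)
  then obtain z where z: "T < z" "z < T + L" "f (T + L) - f T = L * f' z"
    using MVT2[of T "T + L" f f'] der by force
  have "L * f' z \<le> L * (-\<kappa>)"
    using slope[of z] above[of z] z \<open>L > 0\<close> by (intro mult_left_mono) auto
  moreover have "L * \<kappa> = f T - c + \<kappa>" using \<open>\<kappa> > 0\<close> by (simp add: L_def field_simps)
  ultimately have "f (T + L) \<le> c - \<kappa>" using z by linarith
  thus False using above[of "T + L"] \<open>L > 0\<close> \<open>\<kappa> > 0\<close> by auto
qed

lemma deriv_barrier_kept:
  fixes f f' :: "real \<Rightarrow> real"
  assumes der: "\<And>t. t \<ge> T \<Longrightarrow> (f has_real_derivative f' t) (at t)"
    and slope: "\<And>t. t \<ge> T \<Longrightarrow> f t \<ge> c \<Longrightarrow> f' t < 0"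
    and start: "f T \<le> c" and t: "t \<ge> T"
  shows "f t \<le> c"
proof (rule ccontr)
  assume "\<not> f t \<le> c"
  define A where "A = {T..t} \<inter> f -` {..c}"
  have "continuous_on {T..t} f"
    using der by (intro continuous_at_imp_continuous_on ballI) (auto intro: DERIV_isCont)
  hence "closed A" unfolding A_def by (rule continuous_closed_preimage) auto
  moreover have "T \<in> A" using start t by (auto simp: A_def)
  moreover have bdd: "bdd_above A" unfolding A_def by (rule bdd_aboveI[of _ t]) auto
  ultimately have "Sup A \<in> A" using closed_contains_Sup by blast
  hence s0: "T \<le> Sup A" "Sup A \<le> t" "f (Sup A) \<le> c" by (auto simp: A_def)
  with \<open>\<not> f t \<le> c\<close> have "Sup A < t" by (cases "Sup A = t") auto
  have above: "f s > c" if "Sup A < s" "s \<le> t" for s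
  proof (rule ccontr)
    assume "\<not> f s > c"
    hence "s \<in> A" using that s0 by (auto simp: A_def)
    hence "s \<le> Sup A" using bdd by (rule cSup_upper)
    thus False using that by simp
  qed
  obtain z where z: "Sup A < z" "z < t" "f t - f (Sup A) = (t - Sup A) * f' z"
    using MVT2[of "Sup A" t f f'] der s0 \<open>Sup A < t\<close> by force
  have "(t - Sup A) * f' z < 0"
    using slope[of z] above[of z] z s0 \<open>Sup A < t\<close> by (simp add: mult_pos_neg)
  thus False using z s0 \<open>\<not> f t \<le> c\<close> by linarith
qed

lemma eventually_le_of_deriv:
  fixes f f' :: "real \<Rightarrow> real"
  assumes der: "eventually (\<lambda>t. (f has_real_derivative f' t) (at t)) at_top"
    and slope: "eventually (\<lambda>t. f t \<ge> c \<longrightarrow> f' t \<le> -\<kappa>) at_top"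
    and "\<kappa> > 0"
  shows "eventually (\<lambda>t. f t \<le> c) at_top"
proof -
  obtain T where T: "\<And>t. t \<ge> T \<Longrightarrow> (f has_real_derivative f' t) (at t) \<and> (f t \<ge> c \<longrightarrow> f' t \<le> -\<kappa>)"
    using eventually_conj[OF der slope] unfolding eventually_at_top_linorder by blast
  obtain T1 where T1: "T1 \<ge> T" "f T1 \<le> c"
    using deriv_barrier_reached[of T f f' c \<kappa>] T \<open>\<kappa> > 0\<close> by blast
  have "f t \<le> c" if "t \<ge> T1" for t
  proof (rule deriv_barrier_kept[of T1 f f' c t])
    show "(f has_real_derivative f' s) (at s)" if "s \<ge> T1" for s using T T1 that by simp
    show "f' s < 0" if "s \<ge> T1" "f s \<ge> c" for s
      using T[of s] T1 that \<open>\<kappa> > 0\<close> by fastforce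
  qed (use T1 that in auto)
  thus ?thesis unfolding eventually_at_top_linorder by blast
qed

lemma positive_of_relative_growth:
  fixes f h :: "real \<Rightarrow> real"
  assumes cont_f: "continuous_on {0..} f" and cont_h: "continuous_on {0..} h"
    and der: "\<And>t. t > 0 \<Longrightarrow> (f has_real_derivative f t * h t) (at t)"
    and f0: "f 0 > 0" and t: "t \<ge> 0"
  shows "f t > 0"
proof (rule ccontr)
  assume "\<not> f t > 0"
  define A where "A = {0..t} \<inter> f -` {..0}"
  have "closed A" unfolding A_def
    by (rule continuous_closed_preimage) (auto intro: continuous_on_subset[OF cont_f])
  moreover have "t \<in> A" using \<open>\<not> f t > 0\<close> t by (auto simp: A_def)
  moreover have bdd: "bdd_below A" unfolding A_def by (rule bdd_belowI[of _ 0]) auto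
  ultimately have "Inf A \<in> A" using closed_contains_Inf by blast
  hence inf_A: "0 \<le> Inf A" "Inf A \<le> t" "f (Inf A) \<le> 0" by (auto simp: A_def)
  define t0 where "t0 = Inf A"
  have "t0 > 0" using inf_A f0 unfolding t0_def by (cases "Inf A = 0") auto
  have before: "f s > 0" if "0 \<le> s" "s < t0" for s
  proof (rule ccontr)
    assume "\<not> f s > 0"
    hence "s \<in> A" using that inf_A by (auto simp: A_def t0_def)
    hence "t0 \<le> s" unfolding t0_def using bdd by (rule cInf_lower)
    thus False using that by simp
  qed
  \<comment> \<open>Integrating factor: q = f e^{Ms} is nondecreasing where f > 0, if M \<ge> -h on [0,t0].\<close>
  obtain smin where smin: "\<forall>y\<in>{0..t0}. h smin \<le> h y"
    using continuous_attains_inf[OF compact_Icc _ continuous_on_subset[OF cont_h]] \<open>t0 > 0\<close>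
    by (metis atLeastAtMost_iff atLeast_iff empty_iff subsetI)
  define M where "M = max 0 (- h smin)"
  define q where "q = (\<lambda>s. f s * exp (M * s))"
  have q_cont: "continuous_on {0..t0} q" unfolding q_def
    by (intro continuous_intros continuous_on_subset[OF cont_f]) auto
  have q_der: "(q has_real_derivative (f s * exp (M * s) * (h s + M))) (at s)"
    if "s > 0" for s
    unfolding q_def using that
    by (auto intro!: derivative_eq_intros der simp: algebra_simps)
  obtain l z where lz: "0 < z" "z < t0" "DERIV q z :> l" "q t0 - q 0 = (t0 - 0) * l"
    using MVT[OF \<open>t0 > 0\<close> q_cont] q_der real_differentiable_def by force
  have "h smin \<le> h z" using smin lz by simp
  hence "h z + M \<ge> 0" by (simp add: M_def)
  moreover have "l = f z * exp (M * z) * (h z + M)"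
    using DERIV_unique[OF lz(3) q_der[OF \<open>0 < z\<close>]] .
  moreover have "f z > 0" using before lz by auto
  ultimately have "t0 * l \<ge> 0" using \<open>t0 > 0\<close> by simp
  hence "q t0 \<ge> q 0" using lz by simp
  hence "f t0 * exp (M * t0) > 0" using f0 by (simp add: q_def)
  hence "f t0 > 0" by (simp add: zero_less_mult_iff)
  thus False using inf_A by (simp add: t0_def)
qed

lemma sum_split_at:
  fixes f :: "nat \<Rightarrow> real"
  assumes "1 \<le> p" "p \<le> n"
  shows "(\<Sum>k\<in>{1..n}. f k) = (\<Sum>k\<in>{1..<p}. f k) + f p + (\<Sum>k\<in>{p<..n}. f k)"
proof -
  have split: "{1..n} = {1..<p} \<union> insert p {p<..n}" using assms by auto
  have "(\<Sum>k\<in>{1..n}. f k) = (\<Sum>k\<in>{1..<p}. f k) + (\<Sum>k\<in>insert p {p<..n}. f k)"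
    unfolding split by (rule sum.union_disjoint) auto
  thus ?thesis by simp
qed

lemma alpha_unit:
  assumes "k \<in> {1..n}"
  shows "alpha n a j (\<lambda>i. if i = k then c else 0) = a j k * c"
  using assms by (simp add: alpha_def if_distrib cong: if_cong)

lemma alpha_add: "alpha n a j (\<lambda>i. f i + g i) = alpha n a j f + alpha n a j g"
  by (simp add: alpha_def distrib_left sum.distrib)

lemma interaction_below_diagonal:
  assumes "l \<in> {1..n}" "a l l > 0" "alpha n a j (Yax a l) < 1"
  shows "a j l < a l l"
proof -
  have "alpha n a j (Yax a l) = a j l * (1 / a l l)"
    unfolding Yax_def using assms(1) by (rule alpha_unit)
  thus ?thesis using assms by (simp add: divide_less_eq)
qed

text \<open>Second hypothesis, tested on the points of the face gamma_l \<inter> \<pi>_1 \<inter> ... \<inter> \<pi>_{l-1}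
  lying on the k-th axis (or, if a_lk = 0, on the plane through Y^{l} parallel to it):
  on the coordinates k \<ge> l, row j is dominated by row l.\<close>
lemma interaction_dominated:
  assumes l: "l \<in> {1..n}" and k: "k \<in> {l..n}" and all: "a l l > 0"
    and nonneg: "a l k \<ge> 0" "a j l \<ge> 0"
    and face: "\<forall>y\<in>nonneg_orthant n. alpha n a l y = 1 \<and> (\<forall>i\<in>{1..<l}. y i = 0)
                 \<longrightarrow> alpha n a j y \<le> 1"
  shows "a j k \<le> a l k"
proof -
  have k1: "k \<in> {1..n}" using k l by auto
  have on_face: "alpha n a j y \<le> 1"
    if "\<forall>i\<in>{1..n}. 0 \<le> y i" "alpha n a l y = 1" "\<forall>i\<in>{1..<l}. y i = 0" for y
    using face that by (auto simp: nonneg_orthant_def)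
  show ?thesis
  proof (cases "a l k > 0")
    case True
    define y where "y = (\<lambda>i::nat. if i = k then 1 / a l k else 0)"
    have "alpha n a j y \<le> 1"
      by (rule on_face) (use True k k1 in \<open>auto simp: y_def alpha_unit\<close>)
    moreover have "alpha n a j y = a j k / a l k" unfolding y_def using k1 by (simp add: alpha_unit)
    ultimately show ?thesis using True by (simp add: divide_le_eq)
  next
    case False
    hence "a l k = 0" using nonneg by simp
    show ?thesis
    proof (rule ccontr)
      assume "\<not> a j k \<le> a l k"
      hence ajk: "a j k > 0" using \<open>a l k = 0\<close> by simp
      define y where "y = (\<lambda>i::nat. (if i = l then 1 / a l l else 0) + (if i = k then 2 / a j k else 0))"
      have l1: "l \<in> {1..n}" using l .
      have "alpha n a j y \<le> 1"
        by (rule on_face)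
          (use all ajk k \<open>a l k = 0\<close> l1 k1 in \<open>auto simp: y_def alpha_add alpha_unit\<close>)
      moreover have "alpha n a j y = a j l / a l l + 2"
        unfolding y_def alpha_add using k1 l1 ajk by (simp add: alpha_unit)
      moreover have "a j l / a l l \<ge> 0" using nonneg all by simp
      ultimately show False by linarith
    qed
  qed
qed

locale LV_system =
  fixes n :: nat and b :: "nat \<Rightarrow> real" and a :: "nat \<Rightarrow> nat \<Rightarrow> real"
    and x :: "real \<Rightarrow> nat \<Rightarrow> real"
  assumes n2: "n \<ge> 2"
    and bpos: "\<And>i. i \<in> {1..n} \<Longrightarrow> b i > 0"
    and adiag: "\<And>i. i \<in> {1..n} \<Longrightarrow> a i i > 0"
    and anonneg: "\<And>i j. i \<in> {1..n} \<Longrightarrow> j \<in> {1..n} \<Longrightarrow> a i j \<ge> 0"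
    and below_diagonal: "\<And>l j. l \<in> {1..n-1} \<Longrightarrow> j \<in> {l<..n} \<Longrightarrow> a j l < a l l"
    and dominated: "\<And>l j k. l \<in> {1..n-1} \<Longrightarrow> j \<in> {l<..n} \<Longrightarrow> k \<in> {l..n} \<Longrightarrow> a j k \<le> a l k"
    and sol: "LV_solution n b a x"
    and init: "x 0 \<in> pos_orthant n"
begin

lemma deriv:
  assumes "0 < t" "i \<in> {1..n}"
  shows "((\<lambda>s. x s i) has_real_derivative (b i * x t i * (1 - alpha n a i (x t)))) (at t)"
proof -
  have "((\<lambda>s. x s i) has_real_derivative (b i * x t i * (1 - alpha n a i (x t)))) (at t within {0..})"
    using sol assms unfolding LV_solution_def by auto
  moreover have "at t within {0..} = at t" using assms by (intro at_within_interior) auto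
  ultimately show ?thesis by simp
qed

lemma eventually_deriv:
  "i \<in> {1..n} \<Longrightarrow>
   eventually (\<lambda>t. ((\<lambda>s. x s i) has_real_derivative (b i * x t i * (1 - alpha n a i (x t)))) (at t)) at_top"
  using eventually_gt_at_top[of 0] by eventually_elim (rule deriv)

lemma cont: "i \<in> {1..n} \<Longrightarrow> continuous_on {0..} (\<lambda>s. x s i)"
  unfolding continuous_on_eq_continuous_within
  using sol unfolding LV_solution_def by (blast intro: DERIV_continuous)

lemma pos:
  assumes "0 \<le> t" "i \<in> {1..n}"
  shows "x t i > 0"
proof (rule positive_of_relative_growth[where f = "\<lambda>s. x s i" and h = "\<lambda>s. b i * (1 - alpha n a i (x s))"])
  show "continuous_on {0..} (\<lambda>s. x s i)" using assms(2) by (rule cont)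
  show "continuous_on {0..} (\<lambda>s. b i * (1 - alpha n a i (x s)))"
    unfolding alpha_def by (auto intro!: continuous_intros cont)
  show "((\<lambda>s. x s i) has_real_derivative x t i * (b i * (1 - alpha n a i (x t)))) (at t)"
    if "t > 0" for t
    using deriv[OF that assms(2)] by (simp add: algebra_simps)
  show "x 0 i > 0" using init assms(2) by (auto simp: pos_orthant_def)
qed (use assms in auto)

text \<open>Since all entries are nonnegative, alpha_i x dominates its diagonal term.\<close>
lemma alpha_ge_diag:
  assumes "0 \<le> t" "i \<in> {1..n}"
  shows "alpha n a i (x t) \<ge> a i i * x t i"
  unfolding alpha_def
proof (rule member_le_sum[of i "{1..n}" "\<lambda>k. a i k * x t k"])
  fix k assume "k \<in> {1..n} - {i}"
  thus "0 \<le> a i k * x t k" using anonneg assms pos[of t k] by (auto intro: less_imp_le)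
qed (use assms in auto)

definition amax :: real where "amax = (\<Sum>i\<in>{1..n}. \<Sum>k\<in>{1..n}. a i k)"

lemma amax_nonneg: "amax \<ge> 0"
  unfolding amax_def using anonneg by (intro sum_nonneg) auto

lemma a_le_amax:
  assumes "i \<in> {1..n}" "k \<in> {1..n}"
  shows "a i k \<le> amax"
proof -
  have "a i k \<le> (\<Sum>k\<in>{1..n}. a i k)" by (rule member_le_sum) (use assms anonneg in auto)
  also have "\<dots> \<le> amax" unfolding amax_def
    by (rule member_le_sum[of i "{1..n}" "\<lambda>i. \<Sum>k\<in>{1..n}. a i k"])
      (use assms anonneg in \<open>auto intro: sum_nonneg\<close>)
  finally show ?thesis .
qed

lemma alpha_le_amax:
  assumes "0 \<le> t" "i \<in> {1..n}"
  shows "alpha n a i (x t) \<le> amax * (\<Sum>k\<in>{1..n}. x t k)"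
proof -
  have "alpha n a i (x t) \<le> (\<Sum>k\<in>{1..n}. amax * x t k)" unfolding alpha_def
    by (rule sum_mono, rule mult_right_mono) (use a_le_amax assms pos in \<open>auto intro: less_imp_le\<close>)
  thus ?thesis by (simp add: sum_distrib_left)
qed

text \<open>Dissipativity: each species eventually stays below any level above its carrying
  capacity 1/a_ii, since beyond that level its own crowding term makes it decrease.\<close>
lemma eventually_below_capacity:
  assumes i: "i \<in> {1..n}" and \<eta>: "\<eta> > 0"
  shows "eventually (\<lambda>t. x t i \<le> 1 / a i i + \<eta>) at_top"
proof (rule eventually_le_of_deriv[OF eventually_deriv[OF i]])
  have ai: "a i i > 0" and bi: "b i > 0" using adiag bpos i by auto
  show "0 < b i * (1 / a i i + \<eta>) * (a i i * \<eta>)" using ai bi \<eta> by (intro mult_pos_pos add_pos_pos) auto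
  show "eventually (\<lambda>t. 1 / a i i + \<eta> \<le> x t i \<longrightarrow>
          b i * x t i * (1 - alpha n a i (x t)) \<le> - (b i * (1 / a i i + \<eta>) * (a i i * \<eta>))) at_top"
    using eventually_ge_at_top[of 0]
  proof (eventually_elim, intro impI)
    fix t :: real assume t: "0 \<le> t" and big: "1 / a i i + \<eta> \<le> x t i"
    have "a i i * x t i \<ge> 1 + a i i * \<eta>"
      using mult_left_mono[OF big, of "a i i"] ai by (simp add: algebra_simps)
    hence "1 - alpha n a i (x t) \<le> - (a i i * \<eta>)" using alpha_ge_diag[OF t i] by linarith
    hence "b i * x t i * (1 - alpha n a i (x t)) \<le> b i * x t i * (- (a i i * \<eta>))"
      using bi pos[OF t i] by (intro mult_left_mono) auto
    also have "\<dots> \<le> b i * (1 / a i i + \<eta>) * (- (a i i * \<eta>))"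
      using big bi ai \<eta> by (intro mult_right_mono_neg mult_left_mono) auto
    finally show "b i * x t i * (1 - alpha n a i (x t)) \<le> - (b i * (1 / a i i + \<eta>) * (a i i * \<eta>))"
      by simp
  qed
qed

lemma bounded: "\<exists>B>0. eventually (\<lambda>t. \<forall>i\<in>{1..n}. x t i \<le> B) at_top"
proof -
  define B where "B = (\<Sum>i\<in>{1..n}. 2 / a i i)"
  have le: "2 / a i i \<le> B" if "i \<in> {1..n}" for i
    unfolding B_def by (rule member_le_sum) (use adiag that in \<open>auto intro: less_imp_le\<close>)
  have "1 \<in> {1..n}" using n2 by auto
  hence "B > 0" using le[of 1] adiag[of 1] by (smt (verit) divide_pos_pos)
  moreover have "eventually (\<lambda>t. \<forall>i\<in>{1..n}. x t i \<le> 2 / a i i) at_top"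
  proof (rule eventually_ball_finite[OF finite_atLeastAtMost], intro ballI)
    fix i assume i: "i \<in> {1..n}"
    have "eventually (\<lambda>t. x t i \<le> 1 / a i i + 1 / a i i) at_top"
      using adiag[OF i] by (intro eventually_below_capacity[OF i]) simp
    thus "eventually (\<lambda>t. x t i \<le> 2 / a i i) at_top" by simp
  qed
  hence "eventually (\<lambda>t. \<forall>i\<in>{1..n}. x t i \<le> B) at_top"
    by eventually_elim (use le in \<open>fastforce\<close>)
  ultimately show ?thesis by blast
qed

text \<open>While the total mass is small, every species grows at a relative rate of at least
  half the smallest intrinsic rate, because each alpha_k x is then at most 1/2.\<close>
lemma total_rate_when_small:
  assumes t: "0 \<le> t" and small: "amax * (\<Sum>k\<in>{1..n}. x t k) \<le> 1/2"
  shows "Min (b ` {1..n}) / 2 * (\<Sum>k\<in>{1..n}. x t k)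
           \<le> (\<Sum>k\<in>{1..n}. b k * x t k * (1 - alpha n a k (x t)))"
proof -
  have "Min (b ` {1..n}) / 2 * (\<Sum>k\<in>{1..n}. x t k) = (\<Sum>k\<in>{1..n}. Min (b ` {1..n}) / 2 * x t k)"
    by (rule sum_distrib_left)
  also have "\<dots> \<le> (\<Sum>k\<in>{1..n}. b k * x t k * (1 - alpha n a k (x t)))"
  proof (rule sum_mono)
    fix k assume k: "k \<in> {1..n}"
    have xk: "x t k > 0" using pos t k by auto
    have "Min (b ` {1..n}) / 2 * x t k \<le> b k * x t k * (1/2)" using k xk by simp
    also have "\<dots> \<le> b k * x t k * (1 - alpha n a k (x t))"
      using alpha_le_amax[OF t k] small bpos[OF k] xk by (intro mult_left_mono) auto
    finally show "Min (b ` {1..n}) / 2 * x t k \<le> b k * x t k * (1 - alpha n a k (x t))" .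
  qed
  finally show ?thesis .
qed

text \<open>Uniform persistence of the total population S: by the previous lemma,
  (ln S)' \<ge> min b / 2 whenever S is small; hence S is eventually \<ge> s.\<close>
lemma persistent: "\<exists>s>0. eventually (\<lambda>t. (\<Sum>k\<in>{1..n}. x t k) \<ge> s) at_top"
proof -
  define bmin where "bmin = Min (b ` {1..n})"
  have bmin_pos: "bmin > 0" unfolding bmin_def using bpos n2 by (subst Min_gr_iff) auto
  define s where "s = 1 / (2 * (amax + 1))"
  have spos: "s > 0" using amax_nonneg by (simp add: s_def)
  have amax_s: "amax * s \<le> 1/2" using amax_nonneg by (simp add: s_def field_simps)
  define S where "S = (\<lambda>t. \<Sum>k\<in>{1..n}. x t k)"
  define S' where "S' = (\<lambda>t. \<Sum>k\<in>{1..n}. b k * x t k * (1 - alpha n a k (x t)))"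
  have S_pos: "S t > 0" if "0 \<le> t" for t unfolding S_def using n2 pos that by (intro sum_pos) auto
  have S_deriv: "(S has_real_derivative S' t) (at t)" if "0 < t" for t
    unfolding S_def S'_def by (rule DERIV_sum) (use that in \<open>auto intro: deriv\<close>)
  have "eventually (\<lambda>t. - ln (S t) \<le> - ln s) at_top"
  proof (rule eventually_le_of_deriv[where f' = "\<lambda>t. - (S' t / S t)" and \<kappa> = "bmin / 2"])
    show "eventually (\<lambda>t. ((\<lambda>t. - ln (S t)) has_real_derivative - (S' t / S t)) (at t)) at_top"
      using eventually_gt_at_top[of 0]
      by eventually_elim (auto intro!: derivative_eq_intros S_deriv S_pos simp: divide_inverse)
    show "0 < bmin / 2" using bmin_pos by simp
    show "eventually (\<lambda>t. - ln s \<le> - ln (S t) \<longrightarrow> - (S' t / S t) \<le> - (bmin / 2)) at_top"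
      using eventually_ge_at_top[of 0]
    proof (eventually_elim, intro impI)
      fix t :: real assume t: "0 \<le> t" and "- ln s \<le> - ln (S t)"
      hence "S t \<le> s" using S_pos[OF t] spos by simp
      hence "amax * S t \<le> 1/2" using amax_s amax_nonneg mult_left_mono by fastforce
      hence "bmin / 2 * S t \<le> S' t"
        using total_rate_when_small[OF t] unfolding S_def S'_def bmin_def by blast
      thus "- (S' t / S t) \<le> - (bmin / 2)" using S_pos[OF t] by (simp add: le_divide_eq)
    qed
  qed
  hence "eventually (\<lambda>t. S t \<ge> s) at_top"
    using eventually_ge_at_top[of 0] by eventually_elim (use S_pos spos in auto)
  thus ?thesis using spos unfolding S_def by blast
qed

end

text \<open>One layer of the inductive extinction argument: species p < n, assuming that all
  species below p already die out.  The species above p are compared with species p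
  through the Lyapunov-type quantity gap = ln U - ln x_p, where
  U = \<Sum>_{j>p} x_j^{b_p/b_j}; the weights make the growth rates of the summands comparable
  with that of x_p.\<close>
locale LV_layer = LV_system +
  fixes p :: nat
  assumes p: "1 \<le> p" "p < n"
    and lower_extinct: "\<And>k. k \<in> {1..<p} \<Longrightarrow> ((\<lambda>t. x t k) \<longlongrightarrow> 0) at_top"
begin

definition weight :: "nat \<Rightarrow> real" where "weight j = b p / b j"

definition upper_index :: "real \<Rightarrow> real" where
  "upper_index t = (\<Sum>j\<in>{p<..n}. x t j powr weight j)"

definition gap :: "real \<Rightarrow> real" where "gap t = ln (upper_index t) - ln (x t p)"

definition lower_mass :: "real \<Rightarrow> real" where "lower_mass t = (\<Sum>k\<in>{1..<p}. x t k)"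

definition margin :: real where "margin = Min ((\<lambda>j. a p p - a j p) ` {p<..n})"

lemma p_range: "p \<in> {1..n}" "p \<in> {1..n-1}" using p by auto

lemma upper_range: "j \<in> {p<..n} \<Longrightarrow> j \<in> {1..n}"
  using p by auto

lemma lower_range: "k \<in> {1..<p} \<Longrightarrow> k \<in> {1..n}"
  using p by auto

lemma b_p_pos: "b p > 0"
  using bpos p_range by auto

lemma upper_nonempty: "{p<..n} \<noteq> {}" using p by auto

lemma weight_pos: "j \<in> {p<..n} \<Longrightarrow> weight j > 0"
  using bpos p_range by (auto simp: weight_def)

lemma margin_pos: "margin > 0"
  unfolding margin_def using upper_nonempty below_diagonal[OF p_range(2)]
  by (subst Min_gr_iff) auto

lemma margin_le: "j \<in> {p<..n} \<Longrightarrow> margin \<le> a p p - a j p"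
  unfolding margin_def by auto

lemma lower_mass_tendsto: "(lower_mass \<longlongrightarrow> 0) at_top"
  unfolding lower_mass_def[abs_def]
  using tendsto_sum[of "{1..<p}" "\<lambda>k t. x t k" "\<lambda>k. 0" at_top] lower_extinct by simp

lemma upper_index_pos:
  assumes "0 \<le> t" shows "upper_index t > 0"
  unfolding upper_index_def
proof (rule sum_pos)
  fix j assume "j \<in> {p<..n}"
  hence "x t j > 0" using pos[OF assms upper_range] by blast
  thus "x t j powr weight j > 0" by simp
qed (use upper_nonempty in auto)

lemma x_p_eq: "0 \<le> t \<Longrightarrow> x t p = upper_index t * exp (- gap t)"
  using upper_index_pos[of t] pos[of t p] p_range
  by (simp add: gap_def exp_diff exp_minus)

text \<open>The key comparison of the per-capita loss rates: row p dominates the upper rows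
  on the coordinates \<ge> p, with a strict margin on coordinate p; the lower coordinates
  contribute an error controlled by their (vanishing) total mass.\<close>
lemma alpha_difference:
  assumes t: "0 \<le> t" and j: "j \<in> {p<..n}"
  shows "alpha n a p (x t) - alpha n a j (x t) \<ge> margin * x t p - amax * lower_mass t"
proof -
  define h where "h = (\<lambda>k. (a p k - a j k) * x t k)"
  have j1: "j \<in> {1..n}" using j by (rule upper_range)
  have "alpha n a p (x t) - alpha n a j (x t) = (\<Sum>k\<in>{1..n}. h k)"
    unfolding alpha_def h_def by (simp add: sum_subtractf left_diff_distrib)
  also have "\<dots> = (\<Sum>k\<in>{1..<p}. h k) + h p + (\<Sum>k\<in>{p<..n}. h k)"
    using p by (intro sum_split_at) auto
  finally have split: "alpha n a p (x t) - alpha n a j (x t) =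
      (\<Sum>k\<in>{1..<p}. h k) + h p + (\<Sum>k\<in>{p<..n}. h k)" .
  have "- (amax * lower_mass t) = (\<Sum>k\<in>{1..<p}. - (amax * x t k))"
    by (simp add: lower_mass_def sum_distrib_left sum_negf)
  also have "\<dots> \<le> (\<Sum>k\<in>{1..<p}. h k)"
  proof (rule sum_mono)
    fix k assume "k \<in> {1..<p}"
    hence k: "k \<in> {1..n}" by (rule lower_range)
    have "- (amax * x t k) \<le> - (a j k * x t k)"
      using a_le_amax[OF j1 k] pos[OF t k] by simp
    also have "\<dots> \<le> h k" unfolding h_def using anonneg[OF p_range(1) k] pos[OF t k]
      by (simp add: algebra_simps)
    finally show "- (amax * x t k) \<le> h k" .
  qed
  finally have lower: "(\<Sum>k\<in>{1..<p}. h k) \<ge> - (amax * lower_mass t)" .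
  have diag: "h p \<ge> margin * x t p"
    unfolding h_def using margin_le[OF j] pos[OF t p_range(1)] by (simp add: mult_right_mono)
  have upper: "(\<Sum>k\<in>{p<..n}. h k) \<ge> 0"
  proof (rule sum_nonneg)
    fix k assume k: "k \<in> {p<..n}"
    have "a j k \<le> a p k" using dominated[OF p_range(2) j] k by auto
    thus "0 \<le> h k" unfolding h_def using pos[OF t upper_range[OF k]] by simp
  qed
  show ?thesis using split lower diag upper by linarith
qed

text \<open>The rate of change of the gap: a weighted average of the differences above.\<close>
definition gap_rate :: "real \<Rightarrow> real" where
  "gap_rate t = b p * (\<Sum>j\<in>{p<..n}. x t j powr weight j *
      (alpha n a p (x t) - alpha n a j (x t))) / upper_index t"

lemma upper_index_deriv:
  assumes t: "0 < t"
  shows "(upper_index has_real_derivative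
           (\<Sum>j\<in>{p<..n}. x t j powr weight j * (b p * (1 - alpha n a j (x t))))) (at t)"
  unfolding upper_index_def[abs_def]
proof (rule DERIV_sum)
  fix j assume j: "j \<in> {p<..n}"
  hence j1: "j \<in> {1..n}" by (rule upper_range)
  have xj: "x t j > 0" using pos j1 t by auto
  have "weight j * x t j powr (weight j - 1) * (b j * x t j * (1 - alpha n a j (x t)))
        = (weight j * b j) * (x t j powr (weight j - 1) * x t j) * (1 - alpha n a j (x t))"
    by (simp add: algebra_simps)
  also have "\<dots> = x t j powr weight j * (b p * (1 - alpha n a j (x t)))"
    using xj bpos[OF j1] by (simp add: weight_def powr_diff)
  finally have "weight j * x t j powr (weight j - 1) * (b j * x t j * (1 - alpha n a j (x t)))
        = x t j powr weight j * (b p * (1 - alpha n a j (x t)))" .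
  with DERIV_fun_powr[OF deriv[OF t j1] xj, of "weight j"]
  show "((\<lambda>s. x s j powr weight j) has_real_derivative
          x t j powr weight j * (b p * (1 - alpha n a j (x t)))) (at t)"
    by simp
qed

lemma gap_deriv:
  assumes t: "0 < t"
  shows "(gap has_real_derivative gap_rate t) (at t)"
proof -
  define U' where "U' = (\<Sum>j\<in>{p<..n}. x t j powr weight j * (b p * (1 - alpha n a j (x t))))"
  have U: "upper_index t > 0" and xp: "x t p > 0" using upper_index_pos pos p_range t by auto
  have "(gap has_real_derivative U' / upper_index t - b p * x t p * (1 - alpha n a p (x t)) / x t p) (at t)"
    unfolding gap_def[abs_def] U'_def using U xp
    by (auto intro!: derivative_eq_intros upper_index_deriv deriv t p_range simp: divide_inverse)
  moreover have "U' / upper_index t - b p * x t p * (1 - alpha n a p (x t)) / x t p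
      = (U' - b p * (1 - alpha n a p (x t)) * upper_index t) / upper_index t"
    using U xp by (simp add: field_simps)
  moreover have "U' - b p * (1 - alpha n a p (x t)) * upper_index t =
      b p * (\<Sum>j\<in>{p<..n}. x t j powr weight j * (alpha n a p (x t) - alpha n a j (x t)))"
    unfolding U'_def upper_index_def
    by (simp add: sum_distrib_left sum_subtractf[symmetric] algebra_simps)
  ultimately show ?thesis by (simp add: gap_rate_def)
qed

text \<open>Averaging the comparison of loss rates.\<close>
lemma gap_rate_ge:
  assumes t: "0 < t"
  shows "gap_rate t \<ge> b p * (margin * x t p - amax * lower_mass t)"
proof -
  define d where "d = margin * x t p - amax * lower_mass t"
  have "upper_index t * d = (\<Sum>j\<in>{p<..n}. x t j powr weight j * d)"
    by (simp add: upper_index_def sum_distrib_right)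
  also have "\<dots> \<le> (\<Sum>j\<in>{p<..n}. x t j powr weight j * (alpha n a p (x t) - alpha n a j (x t)))"
    using alpha_difference t unfolding d_def by (intro sum_mono mult_left_mono) auto
  finally have "b p * (upper_index t * d) \<le> b p * (\<Sum>j\<in>{p<..n}. x t j powr weight j *
      (alpha n a p (x t) - alpha n a j (x t)))"
    using b_p_pos by (intro mult_left_mono) auto
  thus ?thesis using upper_index_pos[of t] t by (simp add: gap_rate_def d_def field_simps)
qed

text \<open>Whenever a small gap forces species p to be uniformly present, the gap must
  eventually exceed that level: below it, gap' \<ge> b_p (margin m - o(1)) > 0.\<close>
lemma gap_eventually_ge:
  assumes m: "m > 0" and forced: "eventually (\<lambda>t. gap t \<le> L \<longrightarrow> x t p \<ge> m) at_top"
  shows "eventually (\<lambda>t. gap t \<ge> L) at_top"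
proof -
  have "((\<lambda>t. amax * lower_mass t) \<longlongrightarrow> 0) at_top"
    using tendsto_mult_right_zero[OF lower_mass_tendsto] .
  hence small_error: "eventually (\<lambda>t. amax * lower_mass t < margin * m / 2) at_top"
    using m margin_pos by (intro order_tendstoD(2)) auto
  have "eventually (\<lambda>t. - gap t \<le> - L) at_top"
  proof (rule eventually_le_of_deriv[where f' = "\<lambda>t. - gap_rate t" and \<kappa> = "b p * margin * m / 2"])
    show "eventually (\<lambda>t. ((\<lambda>t. - gap t) has_real_derivative - gap_rate t) (at t)) at_top"
      using eventually_gt_at_top[of 0] by eventually_elim (intro DERIV_minus gap_deriv)
    show "0 < b p * margin * m / 2" using b_p_pos margin_pos m by simp
    show "eventually (\<lambda>t. - L \<le> - gap t \<longrightarrow> - gap_rate t \<le> - (b p * margin * m / 2)) at_top"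
      using eventually_gt_at_top[of 0] forced small_error
    proof (eventually_elim, intro impI)
      fix t :: real
      assume t: "0 < t" and "gap t \<le> L \<longrightarrow> m \<le> x t p"
        and err: "amax * lower_mass t < margin * m / 2" and "- L \<le> - gap t"
      hence "margin * m \<le> margin * x t p" using margin_pos by simp
      hence "margin * m / 2 \<le> margin * x t p - amax * lower_mass t" using err by linarith
      hence "b p * (margin * m / 2) \<le> b p * (margin * x t p - amax * lower_mass t)"
        using b_p_pos by simp
      also have "\<dots> \<le> gap_rate t" using gap_rate_ge[OF t] .
      finally show "- gap_rate t \<le> - (b p * margin * m / 2)" by simp
    qed
  qed
  thus ?thesis by simp
qed

text \<open>If the upper species are all small, species p carries a fixed part of the
  persistent total mass, because the lower species die out.\<close>
lemma small_upper_forces_p: "\<exists>\<delta>>0. \<exists>m>0. eventually (\<lambda>t. upper_index t < \<delta> \<longrightarrow> x t p \<ge> m) at_top"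
proof -
  obtain s where s: "s > 0" and total: "eventually (\<lambda>t. (\<Sum>k\<in>{1..n}. x t k) \<ge> s) at_top"
    using persistent by blast
  define q where "q = s / (4 * real n)"
  have q: "q > 0" using s n2 by (simp add: q_def)
  define \<delta> where "\<delta> = Min ((\<lambda>j. q powr weight j) ` {p<..n})"
  have \<delta>: "\<delta> > 0" unfolding \<delta>_def using upper_nonempty q by (subst Min_gr_iff) auto
  have "eventually (\<lambda>t. lower_mass t < s/4) at_top"
    using s by (intro order_tendstoD(2)[OF lower_mass_tendsto]) auto
  hence "eventually (\<lambda>t. upper_index t < \<delta> \<longrightarrow> x t p \<ge> s/2) at_top"
    using total eventually_ge_at_top[of 0]
  proof (eventually_elim, intro impI)
    fix t :: real assume lower: "lower_mass t < s/4" and tot: "(\<Sum>k\<in>{1..n}. x t k) \<ge> s"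
      and t: "0 \<le> t" and U: "upper_index t < \<delta>"
    have "(\<Sum>j\<in>{p<..n}. x t j) \<le> (\<Sum>j\<in>{p<..n}. q)"
    proof (rule sum_mono)
      fix j assume j: "j \<in> {p<..n}"
      have "x t j powr weight j \<le> upper_index t" unfolding upper_index_def
        using j pos[OF t upper_range] by (intro member_le_sum) auto
      also have "\<dots> < q powr weight j" using U j by (simp add: \<delta>_def)
      finally have "x t j powr weight j < q powr weight j" .
      thus "x t j \<le> q"
        using powr_mono2[of "weight j" q "x t j"] weight_pos[OF j] q by force
    qed
    also have "\<dots> \<le> real n * q" using q by (simp add: mult_right_mono)
    also have "\<dots> = s / 4" using n2 by (simp add: q_def)
    finally have "(\<Sum>j\<in>{p<..n}. x t j) \<le> s / 4" .
    moreover have "(\<Sum>k\<in>{1..n}. x t k) = lower_mass t + x t p + (\<Sum>j\<in>{p<..n}. x t j)"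
      unfolding lower_mass_def using p by (intro sum_split_at) auto
    ultimately show "x t p \<ge> s / 2" using lower tot by linarith
  qed
  moreover have "s / 2 > 0" using s by simp
  ultimately show ?thesis using \<delta> by blast
qed

lemma upper_index_persists: "\<exists>r>0. eventually (\<lambda>t. upper_index t \<ge> r) at_top"
proof -
  obtain \<delta> m where \<delta>: "\<delta> > 0" and m: "m > 0"
    and forced: "eventually (\<lambda>t. upper_index t < \<delta> \<longrightarrow> x t p \<ge> m) at_top"
    using small_upper_forces_p by blast
  obtain B where B: "B > 0" and bnd: "eventually (\<lambda>t. \<forall>i\<in>{1..n}. x t i \<le> B) at_top"
    using bounded by blast
  define L where "L = ln \<delta> - ln B - 1"
  text \<open>A gap below L makes the upper index smaller than B e^L < \<delta>.\<close>
  have "eventually (\<lambda>t. gap t \<le> L \<longrightarrow> x t p \<ge> m) at_top"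
    using forced bnd eventually_ge_at_top[of 0]
  proof (eventually_elim, intro impI)
    fix t :: real assume f: "upper_index t < \<delta> \<longrightarrow> x t p \<ge> m"
      and b: "\<forall>i\<in>{1..n}. x t i \<le> B" and t: "0 \<le> t" and g: "gap t \<le> L"
    have "ln (upper_index t) \<le> ln (x t p) + L" using g by (simp add: gap_def)
    also have "\<dots> \<le> ln B + L"
      using bspec[OF b p_range(1)] pos[OF t p_range(1)] by simp
    also have "\<dots> < ln \<delta>" by (simp add: L_def)
    finally show "x t p \<ge> m" using f upper_index_pos[OF t] \<delta> by simp
  qed
  with m have gap_low: "eventually (\<lambda>t. gap t \<ge> L) at_top" by (rule gap_eventually_ge)
  define r where "r = min \<delta> (m * exp L)"
  have "eventually (\<lambda>t. upper_index t \<ge> r) at_top"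
    using gap_low forced eventually_ge_at_top[of 0]
  proof eventually_elim
    case (elim t)
    show ?case
    proof (cases "upper_index t < \<delta>")
      case True
      hence "m * exp L \<le> x t p * exp (gap t)" using elim m
        by (intro mult_mono) auto
      also have "\<dots> = upper_index t" using x_p_eq[of t] elim by (simp add: exp_minus field_simps)
      finally show ?thesis by (simp add: r_def)
    qed (simp add: r_def)
  qed
  moreover have "r > 0" using \<delta> m by (simp add: r_def)
  ultimately show ?thesis by blast
qed

lemma upper_index_bounded: "\<exists>M. eventually (\<lambda>t. upper_index t \<le> M) at_top"
proof -
  obtain B where "B > 0" and bnd: "eventually (\<lambda>t. \<forall>i\<in>{1..n}. x t i \<le> B) at_top"
    using bounded by blast
  have "eventually (\<lambda>t. upper_index t \<le> (\<Sum>j\<in>{p<..n}. B powr weight j)) at_top"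
    using bnd eventually_ge_at_top[of 0]
  proof eventually_elim
    case (elim t)
    show ?case unfolding upper_index_def
    proof (rule sum_mono)
      fix j assume j: "j \<in> {p<..n}"
      show "x t j powr weight j \<le> B powr weight j"
        using elim pos[OF _ upper_range[OF j]] upper_range[OF j] weight_pos[OF j]
        by (intro powr_mono2) (auto intro: less_imp_le)
    qed
  qed
  thus ?thesis by blast
qed

text \<open>Species p dies out: the gap grows without bound while the upper index stays bounded.\<close>
lemma extinct: "((\<lambda>t. x t p) \<longlongrightarrow> 0) at_top"
proof (rule order_tendstoI)
  fix c :: real assume "c < 0"
  show "eventually (\<lambda>t. c < x t p) at_top"
    using eventually_ge_at_top[of 0] by eventually_elim (use pos p_range \<open>c < 0\<close> in force)
next
  fix e :: real assume e: "e > 0"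
  obtain r where r: "r > 0" and persists: "eventually (\<lambda>t. upper_index t \<ge> r) at_top"
    using upper_index_persists by blast
  obtain M where bnd: "eventually (\<lambda>t. upper_index t \<le> M) at_top"
    using upper_index_bounded by blast
  define L where "L = ln (max M 1) - ln e + 1"
  text \<open>Below level L, species p is at least r e^{-L}.\<close>
  have "eventually (\<lambda>t. gap t \<le> L \<longrightarrow> x t p \<ge> r * exp (- L)) at_top"
    using persists eventually_ge_at_top[of 0]
  proof (eventually_elim, intro impI)
    fix t :: real assume "upper_index t \<ge> r" "0 \<le> t" "gap t \<le> L"
    thus "x t p \<ge> r * exp (- L)" using x_p_eq[of t] r by (auto intro!: mult_mono)
  qed
  hence "eventually (\<lambda>t. gap t \<ge> L) at_top" using r by (intro gap_eventually_ge) auto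
  thus "eventually (\<lambda>t. x t p < e) at_top"
    using bnd eventually_ge_at_top[of 0]
  proof eventually_elim
    case (elim t)
    have "ln (x t p) = ln (upper_index t) - gap t" by (simp add: gap_def)
    also have "\<dots> \<le> ln (max M 1) - L"
    proof -
      have "upper_index t \<le> max M 1" using elim by simp
      hence "ln (upper_index t) \<le> ln (max M 1)" using elim upper_index_pos[of t] by simp
      thus ?thesis using elim by linarith
    qed
    also have "\<dots> < ln e" by (simp add: L_def)
    finally show ?case using pos[OF _ p_range(1)] elim e by (simp add: ln_less_cancel_iff)
  qed
qed

end

context LV_system
begin

lemma layer: "1 \<le> p \<Longrightarrow> p < n \<Longrightarrow> (\<And>k. k \<in> {1..<p} \<Longrightarrow> ((\<lambda>t. x t k) \<longlongrightarrow> 0) at_top)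
    \<Longrightarrow> LV_layer n b a x p"
  by (intro LV_layer.intro LV_system_axioms LV_layer_axioms.intro)

lemma extinct_below_top: "k \<in> {1..n-1} \<Longrightarrow> ((\<lambda>t. x t k) \<longlongrightarrow> 0) at_top"
proof (induction k rule: less_induct)
  case (less k)
  hence "LV_layer n b a x k" using n2 by (intro layer) auto
  thus ?case by (rule LV_layer.extinct)
qed

text \<open>The top species persists: it is the whole upper group of the last layer.\<close>
lemma top_persists: "\<exists>m>0. eventually (\<lambda>t. x t n \<ge> m) at_top"
proof -
  interpret top: LV_layer n b a x "n - 1"
    using n2 extinct_below_top by (intro layer) auto
  obtain r where r: "r > 0" and persists: "eventually (\<lambda>t. top.upper_index t \<ge> r) at_top"
    using top.upper_index_persists by blast
  have upper: "{n - 1<..n} = {n}" using n2 by auto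
  define w where "w = top.weight n"
  have w: "w > 0" unfolding w_def using upper by (intro top.weight_pos) auto
  have "eventually (\<lambda>t. x t n \<ge> r powr (1 / w)) at_top"
    using persists eventually_ge_at_top[of 0]
  proof eventually_elim
    case (elim t)
    have xn: "x t n > 0" using pos[OF elim(2)] n2 by auto
    have "top.upper_index t = x t n powr w" unfolding top.upper_index_def upper w_def by simp
    hence "r \<le> x t n powr w" using elim by simp
    hence "r powr (1 / w) \<le> (x t n powr w) powr (1 / w)" using r w by (intro powr_mono2) auto
    thus ?case using xn w by (simp add: powr_powr)
  qed
  moreover have "r powr (1 / w) > 0" using r by simp
  ultimately show ?thesis by blast
qed

text \<open>Once the others are extinct and the top species is bounded away from zero, it
  cannot stay below any level under its carrying capacity.\<close>
lemma top_eventually_above: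
  assumes \<eta>: "\<eta> > 0"
  shows "eventually (\<lambda>t. x t n \<ge> 1 / a n n - \<eta>) at_top"
proof -
  have nn: "n \<in> {1..n}" using n2 by auto
  have ann: "a n n > 0" and bn: "b n > 0" using adiag bpos nn by auto
  obtain m where m: "m > 0" and persists: "eventually (\<lambda>t. x t n \<ge> m) at_top"
    using top_persists by blast
  define e where "e = (\<lambda>t. \<Sum>k\<in>{1..<n}. a n k * x t k)"
  have alpha_top: "alpha n a n (x t) = e t + a n n * x t n" for t
    using sum_split_at[of n n "\<lambda>k. a n k * x t k"] n2 by (simp add: alpha_def e_def)
  have "(e \<longlongrightarrow> (\<Sum>k\<in>{1..<n}. a n k * 0)) at_top" unfolding e_def
    using extinct_below_top by (intro tendsto_sum tendsto_mult tendsto_const) auto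
  hence "eventually (\<lambda>t. e t < a n n * \<eta> / 2) at_top"
    using ann \<eta> by (intro order_tendstoD(2)) auto
  have "eventually (\<lambda>t. - x t n \<le> - (1 / a n n - \<eta>)) at_top"
  proof (rule eventually_le_of_deriv[where f' = "\<lambda>t. - (b n * x t n * (1 - alpha n a n (x t)))"
        and \<kappa> = "b n * m * (a n n * \<eta> / 2)"])
    show "eventually (\<lambda>t. ((\<lambda>t. - x t n) has_real_derivative
            - (b n * x t n * (1 - alpha n a n (x t)))) (at t)) at_top"
      using eventually_deriv[OF nn] by eventually_elim (rule DERIV_minus)
    show "0 < b n * m * (a n n * \<eta> / 2)" using bn m ann \<eta> by simp
    show "eventually (\<lambda>t. - (1 / a n n - \<eta>) \<le> - x t n \<longrightarrow>
            - (b n * x t n * (1 - alpha n a n (x t))) \<le> - (b n * m * (a n n * \<eta> / 2))) at_top"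
      using \<open>eventually (\<lambda>t. e t < a n n * \<eta> / 2) at_top\<close> persists
    proof (eventually_elim, intro impI)
      fix t assume e: "e t < a n n * \<eta> / 2" and xm: "m \<le> x t n"
        and low: "- (1 / a n n - \<eta>) \<le> - x t n"
      have "a n n * x t n \<le> 1 - a n n * \<eta>"
        using mult_left_mono[of "x t n" "1 / a n n - \<eta>" "a n n"] low ann
        by (simp add: algebra_simps)
      hence gain: "1 - alpha n a n (x t) \<ge> a n n * \<eta> / 2" using alpha_top[of t] e by linarith
      have "b n * m * (a n n * \<eta> / 2) \<le> b n * x t n * (a n n * \<eta> / 2)"
        using xm bn ann \<eta> by (intro mult_right_mono mult_left_mono) auto
      also have "\<dots> \<le> b n * x t n * (1 - alpha n a n (x t))"
        using gain bn m xm by (intro mult_left_mono) auto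
      finally show "- (b n * x t n * (1 - alpha n a n (x t))) \<le> - (b n * m * (a n n * \<eta> / 2))"
        by simp
    qed
  qed
  thus ?thesis by eventually_elim simp
qed

lemma top_limit: "((\<lambda>t. x t n) \<longlongrightarrow> 1 / a n n) at_top"
proof (rule order_tendstoI)
  fix c assume c: "c < 1 / a n n"
  hence "eventually (\<lambda>t. x t n \<ge> 1 / a n n - (1 / a n n - c) / 2) at_top"
    by (intro top_eventually_above) simp
  moreover have "c < 1 / a n n - (1 / a n n - c) / 2" using c by (simp add: field_simps)
  ultimately show "eventually (\<lambda>t. c < x t n) at_top"
    by (auto elim: eventually_mono)
next
  fix c assume c: "1 / a n n < c"
  hence "eventually (\<lambda>t. x t n \<le> 1 / a n n + (c - 1 / a n n) / 2) at_top"
    using n2 by (intro eventually_below_capacity) auto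
  moreover have "1 / a n n + (c - 1 / a n n) / 2 < c" using c by (simp add: field_simps)
  ultimately show "eventually (\<lambda>t. x t n < c) at_top"
    by (auto elim: eventually_mono)
qed

end

theorem corollary2p13:
  fixes n :: nat and b :: "nat \<Rightarrow> real" and a :: "nat \<Rightarrow> nat \<Rightarrow> real"
  assumes n2: "n \<ge> 2"
    and bpos: "\<forall>i\<in>{1..n}. b i > 0"
    and adiag: "\<forall>i\<in>{1..n}. a i i > 0"
    and anonneg: "\<forall>i\<in>{1..n}. \<forall>j\<in>{1..n}. a i j \<ge> 0"
    and hyp: "\<forall>l\<in>{1..n-1}. \<forall>j\<in>{1..n} - {1..l}.
               alpha n a j (Yax a l) < 1 \<and>
               (\<forall>y\<in>nonneg_orthant n. alpha n a l y = 1 \<and> (\<forall>i\<in>{1..<l}. y i = 0)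
                   \<longrightarrow> alpha n a j y \<le> 1)"
  shows "global_attractor n b a (Yax a n)"
proof -
  have below_diagonal: "a j l < a l l" if "l \<in> {1..n-1}" "j \<in> {l<..n}" for l j
    using hyp that adiag by (intro interaction_below_diagonal[where n = n]) auto
  have dominated: "a j k \<le> a l k" if "l \<in> {1..n-1}" "j \<in> {l<..n}" "k \<in> {l..n}" for l j k
    using hyp that adiag anonneg by (intro interaction_dominated[where n = n]) auto
  have "\<forall>i\<in>{1..n}. ((\<lambda>t. x t i) \<longlongrightarrow> Yax a n i) at_top"
    if "LV_solution n b a x" "x 0 \<in> pos_orthant n" for x
  proof
    interpret LV_system n b a x
      using n2 bpos adiag anonneg below_diagonal dominated that by unfold_locales auto
    fix i assume "i \<in> {1..n}"
    thus "((\<lambda>t. x t i) \<longlongrightarrow> Yax a n i) at_top"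
      using top_limit extinct_below_top[of i] by (cases "i = n") (auto simp: Yax_def)
  qed
  moreover have "Yax a n \<in> nonneg_orthant n"
    using adiag by (auto simp: Yax_def nonneg_orthant_def less_imp_le)
  ultimately show ?thesis unfolding global_attractor_def by blast
qed

end
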